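(* Let $A$ be a finite set of alternatives with $|A|\ge 3$, let $N=\{1,\dots,n\}$ with $n\ge 2$, and let $\mathbb{D}$ be a minimally rich domain of linear orders over $A$. If every unanimous and locally strategy-proof social choice function $f:\mathbb{D}^n\to A$ satisfies dictatorship, then $\mathbb{D}$ is connected with two distinct neighbours.
   Context: A domain is a set $\mathbb{D}$ of linear orders (strict preferences) over $A$; a preference profile is $P=(P_1,\dots,P_n)\in\mathbb{D}^n$. For a linear order $P_i$, $r_k(P_i)$ is its $k$-th ranked alternative. $\mathbb{D}$ is minimally rich if every $a\in A$ is ranked first in some $P_i\in\mathbb{D}$. Two linear orders $P_i,P_i'$ are adjacent ($P_i\sim P_i'$) if $P_i'$ is obtained from $P_i$ by swapping two consecutively ranked alternatives and leaving all other ranks unchanged. A social choice function (scf) is a map $f:\mathbb{D}^n\to A$. It is unanimous if $f(P)=a$ whenever every voter ranks $a$ first. It is locally strategy-proof if there is no voter $i$, profile $P$, and $P_i'\in\mathbb{D}$ with $P_i'\sim P_i$ such that $f(P_i',P_{-i})\,P_i\,f(P_i,P_{-i})$. It satisfies dictatorship if there is a voter $i$ with $f(P)=r_1(P_i)$ for all $P\in\mathbb{D}^n$. A path in $\mathbb{D}$ is a sequence of distinct preferences in $\mathbb{D}$ in which consecutive ones are adjacent; $\mathbb{D}$ is connected if any two of its preferences are joined by a path in $\mathbb{D}$. For $\bar{\mathbb{D}}\subseteq\mathbb{D}$, a neighbour of $\bar{\mathbb{D}}$ in $\mathbb{D}$ is a $P_i\in\mathbb{D}\setminus\bar{\mathbb{D}}$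 adjacent to some element of $\bar{\mathbb{D}}$. Two preferences $P_i,P_i'\in\mathbb{D}$ are top-connected in $\mathbb{D}$ if there is a path from $P_i$ to $P_i'$ in $\mathbb{D}$ all of whose members have the same top-ranked alternative. The top-connected closure $\mathbb{D}^{TCC}(P_i)$ is the set of preferences in $\mathbb{D}$ top-connected to $P_i$, together with $P_i$. $\mathbb{D}$ is connected with two distinct neighbours if (1) $\mathbb{D}$ is connected, and (2) for every $P_i\in\mathbb{D}$ there exist two neighbours $P_i',P_i''$ of $\mathbb{D}^{TCC}(P_i)$ in $\mathbb{D}$ with $r_1(P_i')\ne r_1(P_i'')$. *)

theory Defs
  imports Main
begin

text \<open>A linear order (strict preference) over A is represented as a list of the elements
  of A without repetition, best first: r_k(p) = p ! (k-1), r_1(p) = hd p.\<close>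

definition lin_orders :: "'a set \<Rightarrow> 'a list set" where
  "lin_orders A = {p. distinct p \<and> set p = A}"

definition top :: "'a list \<Rightarrow> 'a" where
  "top p = hd p"

definition prefers :: "'a list \<Rightarrow> 'a \<Rightarrow> 'a \<Rightarrow> bool" where
  "prefers p a b \<longleftrightarrow> (\<exists>i j. i < j \<and> j < length p \<and> p ! i = a \<and> p ! j = b)"

definition minimally_rich :: "'a set \<Rightarrow> 'a list set \<Rightarrow> bool" where
  "minimally_rich A D \<longleftrightarrow> (\<forall>a\<in>A. \<exists>p\<in>D. top p = a)"

definition adjacent :: "'a list \<Rightarrow> 'a list \<Rightarrow> bool" where
  "adjacent p q \<longleftrightarrow> (\<exists>k. Suc k < length p \<and> q = p[k := p ! Suc k, Suc k := p ! k])"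

text \<open>Profiles over voters 0..n-1 (relabelling of {1..n}): lists of length n of preferences in D.\<close>
definition profiles :: "'a list set \<Rightarrow> nat \<Rightarrow> 'a list list set" where
  "profiles D n = {P. length P = n \<and> set P \<subseteq> D}"

definition is_scf :: "'a set \<Rightarrow> 'a list set \<Rightarrow> nat \<Rightarrow> ('a list list \<Rightarrow> 'a) \<Rightarrow> bool" where
  "is_scf A D n f \<longleftrightarrow> (\<forall>P\<in>profiles D n. f P \<in> A)"

definition unanimous :: "'a list set \<Rightarrow> nat \<Rightarrow> ('a list list \<Rightarrow> 'a) \<Rightarrow> bool" where
  "unanimous D n f \<longleftrightarrow>
     (\<forall>P\<in>profiles D n. \<forall>a. (\<forall>i<n. top (P ! i) = a) \<longrightarrow> f P = a)"

definition locally_sp :: "'a list set \<Rightarrow> nat \<Rightarrow> ('a list list \<Rightarrow> 'a) \<Rightarrow> bool" where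
  "locally_sp D n f \<longleftrightarrow>
     (\<forall>P\<in>profiles D n. \<forall>i<n. \<forall>Q\<in>D. adjacent (P ! i) Q \<longrightarrow>
        \<not> prefers (P ! i) (f (P[i := Q])) (f P))"

definition dictatorial :: "'a list set \<Rightarrow> nat \<Rightarrow> ('a list list \<Rightarrow> 'a) \<Rightarrow> bool" where
  "dictatorial D n f \<longleftrightarrow> (\<exists>i<n. \<forall>P\<in>profiles D n. f P = top (P ! i))"

definition is_path :: "'a list set \<Rightarrow> 'a list list \<Rightarrow> bool" where
  "is_path D ps \<longleftrightarrow> ps \<noteq> [] \<and> distinct ps \<and> set ps \<subseteq> D \<and>
     (\<forall>k. Suc k < length ps \<longrightarrow> adjacent (ps ! k) (ps ! Suc k))"

definition dom_connected :: "'a list set \<Rightarrow> bool" where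
  "dom_connected D \<longleftrightarrow>
     (\<forall>p\<in>D. \<forall>q\<in>D. \<exists>ps. is_path D ps \<and> hd ps = p \<and> last ps = q)"

definition top_connected :: "'a list set \<Rightarrow> 'a list \<Rightarrow> 'a list \<Rightarrow> bool" where
  "top_connected D p q \<longleftrightarrow>
     (\<exists>ps. is_path D ps \<and> hd ps = p \<and> last ps = q \<and> (\<forall>x\<in>set ps. top x = top p))"

definition TCC :: "'a list set \<Rightarrow> 'a list \<Rightarrow> 'a list set" where
  "TCC D p = {q\<in>D. top_connected D p q} \<union> {p}"

definition neighbour :: "'a list set \<Rightarrow> 'a list set \<Rightarrow> 'a list \<Rightarrow> bool" where
  "neighbour D S q \<longleftrightarrow> q \<in> D - S \<and> (\<exists>s\<in>S. adjacent s q)"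

definition connected_two_neighbours :: "'a list set \<Rightarrow> bool" where
  "connected_two_neighbours D \<longleftrightarrow> dom_connected D \<and>
     (\<forall>p\<in>D. \<exists>q r. neighbour D (TCC D p) q \<and> neighbour D (TCC D p) r \<and> top q \<noteq> top r)"

end

(* We argue by contraposition and build a unanimous, locally strategy-proof, non-dictatorial
   rule from any domain violating the condition.
   If D is disconnected, take a part C of D without neighbours: voter 0 decides while her
   preference lies in C, voter 1 otherwise. No adjacent swap crosses the boundary of C.
   Otherwise some closure S = TCC(p), on which every top equals a = top p, has all its
   neighbours topped by one alternative b. Voter 0 decides while her preference lies outside S;
   inside S, voter 1 chooses between a and b. A swap taking voter 0 out of S lands on a
   preference with top b, so it can only move the outcome from a (her top) to b.
   Voter 1 overrules voter 0 inside S, and a third alternative, which this rule never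
   selects while voter 0 stays in S, shows that no other voter is a dictator. *)

theory Submission
  imports Defs
begin

section \<open>Paths and top-connected closures\<close>

lemma adjacent_sym: "adjacent p q \<Longrightarrow> adjacent q p"
proof -
  assume "adjacent p q"
  then obtain k where k: "Suc k < length p" "q = p[k := p ! Suc k, Suc k := p ! k]"
    unfolding adjacent_def by auto
  show "adjacent q p"
    unfolding adjacent_def
  proof (intro exI conjI)
    show "Suc k < length q"
      using k by simp
    show "p = q[k := q ! Suc k, Suc k := q ! k]"
      using k by (auto intro!: nth_equalityI simp: nth_list_update)
  qed
qed

lemma is_path_singleton: "p \<in> D \<Longrightarrow> is_path D [p]"
  unfolding is_path_def by simp

lemma is_path_extend:
  assumes "is_path D ps" "q \<in> D" "adjacent (last ps) q"
  shows "\<exists>ps'. is_path D ps' \<and> hd ps' = hd ps \<and> last ps' = q \<and> set ps' \<subseteq> insert q (set ps)"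
proof (cases "q \<in> set ps")
  case True
  \<comment> \<open>paths repeat no preference, so cut the path at the occurrence of q\<close>
  then obtain i where i: "i < length ps" "ps ! i = q"
    by (auto simp: in_set_conv_nth)
  have "ps \<noteq> []"
    using assms(1) unfolding is_path_def by auto
  moreover have "is_path D (take (Suc i) ps)"
    using assms(1) unfolding is_path_def by (auto dest: in_set_takeD)
  moreover have "last (take (Suc i) ps) = q"
    using i by (metis take_Suc_conv_app_nth last_snoc)
  ultimately show ?thesis
    by (intro exI[of _ "take (Suc i) ps"]) (auto dest: in_set_takeD)
next
  case False
  have "ps \<noteq> []"
    using assms(1) unfolding is_path_def by auto
  have "adjacent ((ps @ [q]) ! k) ((ps @ [q]) ! Suc k)" if "Suc k < length ps + 1" for k
  proof (cases "Suc k < length ps")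
    case True
    then show ?thesis
      using assms(1) unfolding is_path_def by (auto simp: nth_append)
  next
    case False
    with that have "k = length ps - 1"
      by simp
    with \<open>ps \<noteq> []\<close> have "(ps @ [q]) ! k = last ps" "(ps @ [q]) ! Suc k = q"
      by (auto simp: nth_append last_conv_nth)
    with assms(3) show ?thesis by simp
  qed
  then have "is_path D (ps @ [q])"
    using False assms(1,2) unfolding is_path_def by auto
  with \<open>ps \<noteq> []\<close> show ?thesis
    by (intro exI[of _ "ps @ [q]"]) auto
qed

lemma rtranclp_adjacent_imp_path:
  assumes "(\<lambda>x y. x \<in> D \<and> y \<in> D \<and> adjacent x y)\<^sup>*\<^sup>* p q" "p \<in> D"
  shows "\<exists>ps. is_path D ps \<and> hd ps = p \<and> last ps = q"
  using assms(1)
proof (induction rule: rtranclp_induct)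
  case base
  then show ?case
    using is_path_singleton[OF assms(2)] by force
next
  case (step y z)
  then obtain ps where "is_path D ps" "hd ps = p" "last ps = y"
    by auto
  with step.hyps(2) is_path_extend[of D ps z] show ?case
    by force
qed

lemma top_connected_refl: "p \<in> D \<Longrightarrow> top_connected D p p"
  unfolding top_connected_def using is_path_singleton by force

lemma top_connected_top:
  assumes "top_connected D p q"
  shows "top q = top p"
proof -
  obtain ps where "ps \<noteq> []" "last ps = q" "\<forall>x\<in>set ps. top x = top p"
    using assms unfolding top_connected_def is_path_def by blast
  then show ?thesis
    using last_in_set by blast
qed

lemma top_connected_extend:
  assumes "top_connected D p s" "q \<in> D" "adjacent s q" "top q = top p"
  shows "top_connected D p q"
proof -
  obtain ps where ps: "is_path D ps" "hd ps = p" "last ps = s" "\<forall>x\<in>set ps. top x = top p"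
    using assms(1) unfolding top_connected_def by blast
  then obtain ps' where "is_path D ps'" "hd ps' = p" "last ps' = q" "set ps' \<subseteq> insert q (set ps)"
    using is_path_extend[OF ps(1) assms(2)] assms(3) by auto
  with ps(4) assms(4) show ?thesis
    unfolding top_connected_def by auto
qed

lemma TCC_eq: "p \<in> D \<Longrightarrow> TCC D p = {q \<in> D. top_connected D p q}"
  unfolding TCC_def using top_connected_refl by blast

lemma top_TCC: "q \<in> TCC D p \<Longrightarrow> top q = top p"
  unfolding TCC_def by (auto dest: top_connected_top)

lemma top_neighbour_TCC:
  assumes "p \<in> D" "neighbour D (TCC D p) q"
  shows "top q \<noteq> top p"
proof
  assume "top q = top p"
  obtain s where s: "s \<in> TCC D p" "adjacent s q" and q: "q \<in> D" "q \<notin> TCC D p"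
    using assms(2) unfolding neighbour_def by blast
  from s(1) have "top_connected D p s"
    unfolding TCC_eq[OF assms(1)] by simp
  then have "top_connected D p q"
    using q(1) s(2) \<open>top q = top p\<close> by (rule top_connected_extend)
  with q show False
    unfolding TCC_eq[OF assms(1)] by simp
qed

lemma lin_orders_distinct: "p \<in> lin_orders A \<Longrightarrow> distinct p"
  unfolding lin_orders_def by simp

lemma lin_orders_set: "p \<in> lin_orders A \<Longrightarrow> set p = A"
  unfolding lin_orders_def by simp

lemma top_in_lin_orders:
  assumes "p \<in> lin_orders A" "A \<noteq> {}"
  shows "top p \<in> A"
proof -
  have "set p = A"
    using assms(1) by (rule lin_orders_set)
  with assms(2) show ?thesis
    unfolding top_def using hd_in_set by fastforce
qed

lemma not_prefers_refl:
  assumes "distinct p"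
  shows "\<not> prefers p x x"
proof
  assume "prefers p x x"
  then obtain i j where ij: "i < j" "j < length p" "p ! i = x" "p ! j = x"
    unfolding prefers_def by blast
  then have "i = j"
    using nth_eq_iff_index_eq[OF assms, of i j] by simp
  with ij(1) show False
    by simp
qed

lemma prefers_asym:
  assumes "distinct p" "prefers p x y"
  shows "\<not> prefers p y x"
proof
  assume "prefers p y x"
  then obtain i j where ij: "i < j" "j < length p" "p ! i = y" "p ! j = x"
    unfolding prefers_def by blast
  obtain i' j' where ij': "i' < j'" "j' < length p" "p ! i' = x" "p ! j' = y"
    using assms(2) unfolding prefers_def by blast
  have "i = j'"
    using ij ij' nth_eq_iff_index_eq[OF assms(1), of i j'] by simp
  moreover have "j = i'"
    using ij ij' nth_eq_iff_index_eq[OF assms(1), of j i'] by simp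
  ultimately show False
    using ij(1) ij'(1) by simp
qed

lemma top_eq_nth_0: "p \<noteq> [] \<Longrightarrow> top p = p ! 0"
  unfolding top_def by (simp add: hd_conv_nth)

lemma not_prefers_top:
  assumes "distinct p"
  shows "\<not> prefers p x (top p)"
proof
  assume "prefers p x (top p)"
  then obtain i j where ij: "i < j" "j < length p" "p ! j = top p"
    unfolding prefers_def by blast
  then have "p \<noteq> []"
    by auto
  with ij(3) have "p ! j = p ! 0"
    by (simp add: top_eq_nth_0)
  with ij(2) \<open>p \<noteq> []\<close> have "j = 0"
    using nth_eq_iff_index_eq[OF assms, of j 0] by simp
  with ij(1) show False
    by simp
qed

lemma prefers_top:
  assumes "b \<in> set p" "b \<noteq> top p"
  shows "prefers p (top p) b"
proof -
  obtain j where j: "j < length p" "p ! j = b"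
    using assms(1) by (auto simp: in_set_conv_nth)
  have "top p = p ! 0"
    using assms(1) by (auto intro: top_eq_nth_0)
  have "j \<noteq> 0"
  proof
    assume "j = 0"
    with assms(2) j(2) \<open>top p = p ! 0\<close> show False
      by simp
  qed
  with j \<open>top p = p ! 0\<close> show ?thesis
    unfolding prefers_def by (intro exI[of _ 0] exI[of _ j]) simp
qed

lemma not_prefers_unchanged_or_top:
  assumes "distinct p" "x = y \<or> y = top p"
  shows "\<not> prefers p x y"
  using assms(2) not_prefers_refl[OF assms(1), of y] not_prefers_top[OF assms(1), of x] by auto

lemma not_prefers_binary_choice:
  assumes "distinct p" "x \<in> {a, b}"
  shows "\<not> prefers p x (if prefers p a b then a else b)"
  using assms(2) not_prefers_refl[OF assms(1), of a] not_prefers_refl[OF assms(1), of b]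
    prefers_asym[OF assms(1), of a b] by auto

lemma profiles_length: "P \<in> profiles D n \<Longrightarrow> length P = n"
  unfolding profiles_def by simp

lemma profiles_nth: "P \<in> profiles D n \<Longrightarrow> i < n \<Longrightarrow> P ! i \<in> D"
  unfolding profiles_def by auto

lemma replicate_update_in_profiles:
  "p \<in> D \<Longrightarrow> q \<in> D \<Longrightarrow> (replicate n p)[i := q] \<in> profiles D n"
  unfolding profiles_def using set_update_subset_insert[of "replicate n p" i q] by auto

lemma card_ge_3_ex_other:
  assumes "finite A" "card A \<ge> 3"
  shows "\<exists>c\<in>A. c \<noteq> a \<and> c \<noteq> b"
proof (rule ccontr)
  assume "\<not> ?thesis"
  then have "A \<subseteq> {a, b}"
    by auto
  then have "card A \<le> card {a, b}"
    by (simp add: card_mono)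
  also have "\<dots> \<le> 2"
    by (simp add: card_insert_if)
  finally show False
    using assms(2) by simp
qed

lemma minimally_rich_ex_top:
  "minimally_rich A D \<Longrightarrow> c \<in> A \<Longrightarrow> \<exists>r\<in>D. top r = c"
  unfolding minimally_rich_def by blast

section \<open>Two non-dictatorial rules\<close>

definition component_scf :: "'a list set \<Rightarrow> 'a list list \<Rightarrow> 'a" where
  "component_scf C P = (if P ! 0 \<in> C then top (P ! 0) else top (P ! 1))"

lemma component_scf_is_scf:
  assumes "D \<subseteq> lin_orders A" "A \<noteq> {}" "n \<ge> 2"
  shows "is_scf A D n (component_scf C)"
  unfolding is_scf_def
proof
  fix P
  assume "P \<in> profiles D n"
  with assms(1,3) have "P ! 0 \<in> lin_orders A" "P ! 1 \<in> lin_orders A"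
    using profiles_nth[of P D n 0] profiles_nth[of P D n 1] by auto
  with assms(2) show "component_scf C P \<in> A"
    unfolding component_scf_def by (simp add: top_in_lin_orders)
qed

lemma component_scf_unanimous: "n \<ge> 2 \<Longrightarrow> unanimous D n (component_scf C)"
  unfolding unanimous_def component_scf_def by auto

lemma component_scf_locally_sp:
  assumes "D \<subseteq> lin_orders A" and closed: "\<And>y. \<not> neighbour D C y"
  shows "locally_sp D n (component_scf C)"
  unfolding locally_sp_def
proof (intro ballI allI impI)
  fix P i Q
  assume P: "P \<in> profiles D n" "i < n" and Q: "Q \<in> D" "adjacent (P ! i) Q"
  have "P ! i \<in> D" "length P = n"
    using P by (auto intro: profiles_nth profiles_length)
  with assms(1) have "distinct (P ! i)"
    by (auto intro: lin_orders_distinct)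
  have "component_scf C (P[i := Q]) = component_scf C P \<or> component_scf C P = top (P ! i)"
  proof (cases "i = 0")
    case True
    have "P ! 0 \<in> C \<longleftrightarrow> Q \<in> C"
    proof
      show "Q \<in> C" if "P ! 0 \<in> C"
        using closed[of Q] Q that True unfolding neighbour_def by blast
      show "P ! 0 \<in> C" if "Q \<in> C"
        using closed[of "P ! 0"] \<open>P ! i \<in> D\<close> adjacent_sym[OF Q(2)] that True
        unfolding neighbour_def by blast
    qed
    with True P(2) \<open>length P = n\<close> show ?thesis
      unfolding component_scf_def by auto
  next
    case False
    then show ?thesis
      unfolding component_scf_def by (cases "i = 1") auto
  qed
  with \<open>distinct (P ! i)\<close>
  show "\<not> prefers (P ! i) (component_scf C (P[i := Q])) (component_scf C P)"
    by (rule not_prefers_unchanged_or_top)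
qed

lemma component_scf_not_dictatorial:
  assumes rich: "minimally_rich A D" and other: "\<And>x. \<exists>c\<in>A. c \<noteq> x" and "n \<ge> 2"
    and "C \<subseteq> D" "p \<in> C" "q \<in> D - C"
  shows "\<not> dictatorial D n (component_scf C)"
  unfolding dictatorial_def
proof (intro notI, elim exE conjE)
  fix i
  assume "i < n" and dict: "\<forall>P\<in>profiles D n. component_scf C P = top (P ! i)"
  show False
  proof (cases "i = 0")
    case True
    obtain r where r: "r \<in> D" "top r \<noteq> top q"
      using other[of "top q"] minimally_rich_ex_top[OF rich] by metis
    let ?P = "(replicate n r)[0 := q]"
    have "?P \<in> profiles D n"
      using r(1) assms(6) by (auto intro: replicate_update_in_profiles)
    with dict True have "component_scf C ?P = top q"
      using \<open>i < n\<close> by simp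
    with r(2) assms(3,6) show False
      unfolding component_scf_def by simp
  next
    case False
    obtain r where r: "r \<in> D" "top r \<noteq> top p"
      using other[of "top p"] minimally_rich_ex_top[OF rich] by metis
    let ?P = "(replicate n p)[i := r]"
    have "?P \<in> profiles D n"
      using r(1) assms(4,5) by (auto intro: replicate_update_in_profiles)
    with dict \<open>i < n\<close> have "component_scf C ?P = top r"
      by simp
    with r(2) False \<open>i < n\<close> assms(5) show False
      unfolding component_scf_def by simp
  qed
qed

definition pair_choice_scf :: "'a list set \<Rightarrow> 'a \<Rightarrow> 'a \<Rightarrow> 'a list list \<Rightarrow> 'a" where
  "pair_choice_scf S a b P =
     (if P ! 0 \<in> S then (if prefers (P ! 1) a b then a else b) else top (P ! 0))"

lemma pair_choice_scf_is_scf: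
  assumes "D \<subseteq> lin_orders A" "a \<in> A" "b \<in> A" "n \<ge> 2"
  shows "is_scf A D n (pair_choice_scf S a b)"
  unfolding is_scf_def
proof
  fix P
  assume "P \<in> profiles D n"
  with assms(1,4) have "P ! 0 \<in> lin_orders A"
    using profiles_nth[of P D n 0] by auto
  with assms(2,3) show "pair_choice_scf S a b P \<in> A"
    unfolding pair_choice_scf_def using top_in_lin_orders[of "P ! 0" A] by auto
qed

lemma pair_choice_scf_unanimous:
  assumes "D \<subseteq> lin_orders A" "b \<in> A" "a \<noteq> b" "\<forall>x\<in>S. top x = a" "n \<ge> 2"
  shows "unanimous D n (pair_choice_scf S a b)"
  unfolding unanimous_def
proof (intro ballI allI impI)
  fix P c
  assume P: "P \<in> profiles D n" and tops: "\<forall>i<n. top (P ! i) = c"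
  show "pair_choice_scf S a b P = c"
  proof (cases "P ! 0 \<in> S")
    case True
    with assms(4,5) tops have "top (P ! 1) = a"
      by force
    moreover have "P ! 1 \<in> lin_orders A"
      using P assms(1,5) profiles_nth[of P D n 1] by auto
    then have "set (P ! 1) = A"
      by (rule lin_orders_set)
    ultimately have "prefers (P ! 1) a b"
      using prefers_top[of b "P ! 1"] assms(2,3) by simp
    with True \<open>top (P ! 1) = a\<close> tops assms(5) show ?thesis
      unfolding pair_choice_scf_def by force
  next
    case False
    with tops assms(5) show ?thesis
      unfolding pair_choice_scf_def by simp
  qed
qed

lemma pair_choice_scf_locally_sp:
  assumes "D \<subseteq> lin_orders A" and top_S: "\<forall>x\<in>S. top x = a"
    and top_neighbour: "\<And>y. neighbour D S y \<Longrightarrow> top y = b"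
  shows "locally_sp D n (pair_choice_scf S a b)"
  unfolding locally_sp_def
proof (intro ballI allI impI)
  fix P i Q
  assume P: "P \<in> profiles D n" "i < n" and Q: "Q \<in> D" "adjacent (P ! i) Q"
  let ?f = "pair_choice_scf S a b"
  have "P ! i \<in> D" "length P = n"
    using P by (auto intro: profiles_nth profiles_length)
  with assms(1) have d: "distinct (P ! i)"
    by (auto intro: lin_orders_distinct)
  consider "i = 0" | "i = 1" | "i \<noteq> 0" "i \<noteq> 1"
    by blast
  then show "\<not> prefers (P ! i) (?f (P[i := Q])) (?f P)"
  proof cases
    case 1
    have "?f (P[i := Q]) = ?f P \<or> ?f P = top (P ! i)"
    proof (cases "P ! 0 \<in> S \<and> Q \<notin> S")
      case True
      with Q 1 have "neighbour D S Q"
        unfolding neighbour_def by blast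
      then have "top Q = b"
        by (rule top_neighbour)
      with True 1 P(2) \<open>length P = n\<close> top_S show ?thesis
        unfolding pair_choice_scf_def by auto
    next
      case False
      with 1 P(2) \<open>length P = n\<close> show ?thesis
        unfolding pair_choice_scf_def by auto
    qed
    with d show ?thesis
      by (rule not_prefers_unchanged_or_top)
  next
    case 2
    show ?thesis
    proof (cases "P ! 0 \<in> S")
      case True
      with 2 have "?f (P[i := Q]) \<in> {a, b}" "?f P = (if prefers (P ! i) a b then a else b)"
        unfolding pair_choice_scf_def by auto
      then show ?thesis
        using not_prefers_binary_choice[OF d] by simp
    next
      case False
      with 2 have "?f (P[i := Q]) = ?f P"
        unfolding pair_choice_scf_def by simp
      then show ?thesis
        using not_prefers_unchanged_or_top[OF d] by simp
    qed
  next
    case 3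
    then have "?f (P[i := Q]) = ?f P"
      unfolding pair_choice_scf_def by simp
    then show ?thesis
      using not_prefers_unchanged_or_top[OF d] by simp
  qed
qed

lemma pair_choice_scf_not_dictatorial:
  assumes "D \<subseteq> lin_orders A" and rich: "minimally_rich A D"
    and other: "\<exists>c\<in>A. c \<noteq> a \<and> c \<noteq> b"
    and "a \<noteq> b" "b \<in> A" "n \<ge> 2" "S \<subseteq> D" "p \<in> S" "top p = a"
  shows "\<not> dictatorial D n (pair_choice_scf S a b)"
  unfolding dictatorial_def
proof (intro notI, elim exE conjE)
  fix i
  assume "i < n" and dict: "\<forall>P\<in>profiles D n. pair_choice_scf S a b P = top (P ! i)"
  show False
  proof (cases "i = 0")
    case True
    obtain r where r: "r \<in> D" "top r = b"
      using minimally_rich_ex_top[OF rich assms(5)] by blast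
    with assms(1) have "\<not> prefers r a b"
      using not_prefers_top[of r a] by (auto intro: lin_orders_distinct)
    let ?P = "(replicate n r)[0 := p]"
    have "?P \<in> profiles D n"
      using r(1) assms(7,8) by (auto intro: replicate_update_in_profiles)
    with dict True \<open>i < n\<close> have "pair_choice_scf S a b ?P = a"
      using assms(9) by simp
    with \<open>\<not> prefers r a b\<close> assms(4,6,8) show False
      unfolding pair_choice_scf_def by simp
  next
    case False
    obtain c where "c \<in> A" "c \<noteq> a" "c \<noteq> b"
      using other by blast
    then obtain r where "r \<in> D" "top r = c"
      using minimally_rich_ex_top[OF rich] by blast
    let ?P = "(replicate n p)[i := r]"
    have "?P \<in> profiles D n"
      using \<open>r \<in> D\<close> assms(7,8) by (auto intro: replicate_update_in_profiles)
    with dict \<open>i < n\<close> have "pair_choice_scf S a b ?P = c"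
      using \<open>top r = c\<close> by simp
    with False \<open>i < n\<close> \<open>c \<noteq> a\<close> \<open>c \<noteq> b\<close> assms(8) show False
      unfolding pair_choice_scf_def by (simp split: if_splits)
  qed
qed

lemma not_dom_connected_obtain_closed_part:
  assumes "\<not> dom_connected D"
  obtains C p q where "C \<subseteq> D" "p \<in> C" "q \<in> D - C" "\<And>y. \<not> neighbour D C y"
proof -
  define R where "R = (\<lambda>x y. x \<in> D \<and> y \<in> D \<and> adjacent x y)"
  obtain p q where "p \<in> D" "q \<in> D" "\<not> R\<^sup>*\<^sup>* p q"
    using assms rtranclp_adjacent_imp_path[of D] unfolding dom_connected_def R_def by blast
  define C where "C = {x \<in> D. R\<^sup>*\<^sup>* p x}"
  show thesis
  proof (rule that[of C p q])
    show "C \<subseteq> D" "p \<in> C" "q \<in> D - C"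
      unfolding C_def using \<open>p \<in> D\<close> \<open>q \<in> D\<close> \<open>\<not> R\<^sup>*\<^sup>* p q\<close> by auto
    show "\<not> neighbour D C y" for y
      unfolding neighbour_def C_def R_def by (auto intro: rtranclp.rtrancl_into_rtrancl)
  qed
qed

lemma TCC_neighbours_obtain_common_top:
  assumes "D \<subseteq> lin_orders A" "p \<in> D" "\<And>x. \<exists>c\<in>A. c \<noteq> x"
    and common: "\<forall>q r. neighbour D (TCC D p) q \<and> neighbour D (TCC D p) r \<longrightarrow> top q = top r"
  obtains b where "b \<in> A" "top p \<noteq> b" "\<And>y. neighbour D (TCC D p) y \<Longrightarrow> top y = b"
proof (cases "\<exists>y. neighbour D (TCC D p) y")
  case True
  then obtain y where y: "neighbour D (TCC D p) y"
    by blast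
  then have "y \<in> lin_orders A"
    using assms(1) unfolding neighbour_def by blast
  moreover have "A \<noteq> {}"
    using assms(3) by blast
  ultimately have "top y \<in> A"
    by (rule top_in_lin_orders)
  moreover have "top p \<noteq> top y"
    using top_neighbour_TCC[OF assms(2) y] by simp
  moreover have "top z = top y" if "neighbour D (TCC D p) z" for z
    using common y that by blast
  ultimately show thesis
    by (rule that)
next
  case False
  obtain c where "c \<in> A" "top p \<noteq> c"
    using assms(3)[of "top p"] by auto
  moreover have "top z = c" if "neighbour D (TCC D p) z" for z
    using False that by blast
  ultimately show thesis
    by (rule that)
qed

lemma nondictatorial_scf_if_not_dom_connected:
  assumes "D \<subseteq> lin_orders A" "minimally_rich A D" "\<And>x. \<exists>c\<in>A. c \<noteq> x" "n \<ge> 2"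
    and "\<not> dom_connected D"
  shows "\<exists>f. is_scf A D n f \<and> unanimous D n f \<and> locally_sp D n f \<and> \<not> dictatorial D n f"
proof -
  obtain C p q where C: "C \<subseteq> D" "p \<in> C" "q \<in> D - C" "\<And>y. \<not> neighbour D C y"
    using not_dom_connected_obtain_closed_part[OF assms(5)] by blast
  have "A \<noteq> {}"
    using assms(3) by blast
  show ?thesis
  proof (intro exI conjI)
    show "is_scf A D n (component_scf C)"
      using assms(1) \<open>A \<noteq> {}\<close> assms(4) by (rule component_scf_is_scf)
    show "unanimous D n (component_scf C)"
      using assms(4) by (rule component_scf_unanimous)
    show "locally_sp D n (component_scf C)"
      using assms(1) C(4) by (rule component_scf_locally_sp)
    show "\<not> dictatorial D n (component_scf C)"
      using assms(2,3,4) C(1-3) by (rule component_scf_not_dictatorial)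
  qed
qed

lemma nondictatorial_scf_if_TCC_neighbours_common_top:
  assumes "D \<subseteq> lin_orders A" "minimally_rich A D" "\<And>a b. \<exists>c\<in>A. c \<noteq> a \<and> c \<noteq> b" "n \<ge> 2"
    and "p \<in> D"
    and "\<forall>q r. neighbour D (TCC D p) q \<and> neighbour D (TCC D p) r \<longrightarrow> top q = top r"
  shows "\<exists>f. is_scf A D n f \<and> unanimous D n f \<and> locally_sp D n f \<and> \<not> dictatorial D n f"
proof -
  have "\<exists>c\<in>A. c \<noteq> x" for x
    using assms(3) by blast
  then obtain b where b: "b \<in> A" "top p \<noteq> b" "\<And>y. neighbour D (TCC D p) y \<Longrightarrow> top y = b"
    using TCC_neighbours_obtain_common_top[OF assms(1,5) _ assms(6)] by blast
  have S: "TCC D p \<subseteq> D" "p \<in> TCC D p"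
    using assms(5) by (auto simp: TCC_eq top_connected_refl)
  have top_S: "\<forall>x\<in>TCC D p. top x = top p"
    using top_TCC by blast
  have "top p \<in> A"
    using assms(1,5) b(1) by (auto intro: top_in_lin_orders)
  show ?thesis
  proof (intro exI conjI)
    show "is_scf A D n (pair_choice_scf (TCC D p) (top p) b)"
      using assms(1) \<open>top p \<in> A\<close> b(1) assms(4) by (rule pair_choice_scf_is_scf)
    show "unanimous D n (pair_choice_scf (TCC D p) (top p) b)"
      using assms(1) b(1,2) top_S assms(4) by (rule pair_choice_scf_unanimous)
    show "locally_sp D n (pair_choice_scf (TCC D p) (top p) b)"
      using assms(1) top_S b(3) by (rule pair_choice_scf_locally_sp)
    show "\<not> dictatorial D n (pair_choice_scf (TCC D p) (top p) b)"
      using assms(1,2,3) b(2,1) assms(4) S(1,2) refl by (rule pair_choice_scf_not_dictatorial)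
  qed
qed

theorem theorem1:
  fixes A :: "'a set" and D :: "'a list set" and n :: nat
  assumes "finite A" and "card A \<ge> 3" and "n \<ge> 2"
    and "D \<subseteq> lin_orders A" and "minimally_rich A D"
    and "\<forall>f. is_scf A D n f \<and> unanimous D n f \<and> locally_sp D n f \<longrightarrow> dictatorial D n f"
  shows "connected_two_neighbours D"
proof (rule ccontr)
  assume "\<not> connected_two_neighbours D"
  then consider "\<not> dom_connected D"
    | p where "p \<in> D"
        "\<forall>q r. neighbour D (TCC D p) q \<and> neighbour D (TCC D p) r \<longrightarrow> top q = top r"
    unfolding connected_two_neighbours_def by blast
  then have "\<exists>f. is_scf A D n f \<and> unanimous D n f \<and> locally_sp D n f \<and> \<not> dictatorial D n f"
  proof cases
    case 1
    then show ?thesis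
      using nondictatorial_scf_if_not_dom_connected[OF assms(4,5) _ assms(3)]
        card_ge_3_ex_other[OF assms(1,2)] by blast
  next
    case 2
    then show ?thesis
      using nondictatorial_scf_if_TCC_neighbours_common_top[OF assms(4,5) _ assms(3)]
        card_ge_3_ex_other[OF assms(1,2)] by blast
  qed
  with assms(6) show False
    by blast
qed

end
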